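(* For every integer $t\ge 0$, $F_{3t+2,\,2t+2}=1$ and $F_{5t+4,\,2t+2}=1$.
   Context: Define maps $G,S:\mathbb Z^2\to\mathbb Z^2$ by $G(x,y)=(x+y,y)$ and $S(x,y)=(3x-2y+1,\,2x-y+1)$. Define the array $(F_{n,k})_{n,k\ge 0}$ by $F_{0,0}=1$ and, for $(n,k)\neq(0,0)$, $F_{n,k}$ is the number of finite words $w=w_1w_2\cdots w_m$ ($m\ge 0$) over the alphabet $\{G,S\}$ with $w_1\circ w_2\circ\cdots\circ w_m(1,1)=(n,k)$ (the empty word acts as the identity). Equivalently: start with all entries $0$, set $F_{0,0}=1$ and $F_{1,1}=1$, and thereafter, whenever an entry $F_{n,k}$ with $n\ge 1$ changes its value, increase $F_{n+k,k}$ and $F_{3n+1-2k,\,2n+1-k}$ by $1$. *)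

theory Defs
  imports Main
begin

datatype letter = G | S

fun act :: "letter \<Rightarrow> int \<times> int \<Rightarrow> int \<times> int" where
  "act G (x, y) = (x + y, y)"
| "act S (x, y) = (3*x - 2*y + 1, 2*x - y + 1)"

definition word_act :: "letter list \<Rightarrow> int \<times> int \<Rightarrow> int \<times> int" where
  "word_act w p = foldr act w p"

definition F :: "nat \<Rightarrow> nat \<Rightarrow> nat" where
  "F n k = (if (n, k) = (0, 0) then 1
            else card {w. word_act w (1, 1) = (int n, int k)})"

end

theory Submission
  imports Defs
begin

text \<open>On the cone \<open>y \<ge> 1, x \<ge> y\<close>, which contains \<open>(1,1)\<close> and is mapped into itself by
  \<open>G\<close> and \<open>S\<close>, both maps are injective and their images are separated by the line \<open>x = 2y\<close>:
  \<open>G\<close> lands in \<open>x \<ge> 2y\<close>, \<open>S\<close> in \<open>x < 2y\<close>, and neither image contains \<open>(1,1)\<close>.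
  A ping-pong argument then shows that distinct words send \<open>(1,1)\<close> to distinct points, so every
  entry \<open>F n k\<close> with \<open>(n,k) \<noteq> (0,0)\<close> is \<open>0\<close> or \<open>1\<close>. The two points of the theorem are reached by
  the words \<open>S G\<^sup>t\<close> and \<open>G S G\<^sup>t\<close>.\<close>

lemma inj_foldr_ping_pong:
  fixes f :: "'a \<Rightarrow> 'b \<Rightarrow> 'b"
  assumes base_in: "p \<in> R"
    and maps_to: "\<And>a x. x \<in> R \<Longrightarrow> f a x \<in> R"
    and inj_letter: "\<And>a. inj_on (f a) R"
    and disjoint: "\<And>a b x y. x \<in> R \<Longrightarrow> y \<in> R \<Longrightarrow> f a x = f b y \<Longrightarrow> a = b"
    and base_not_image: "\<And>a x. x \<in> R \<Longrightarrow> f a x \<noteq> p"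
  shows "inj (\<lambda>w. foldr f w p)"
proof -
  have in_R: "foldr f w p \<in> R" for w
    by (induction w) (auto simp: base_in maps_to)
  have "v = w" if "foldr f v p = foldr f w p" for v w
    using that
  proof (induction v arbitrary: w)
    case Nil
    then show ?case
      using base_not_image in_R by (cases w) (auto dest: sym)
  next
    case (Cons a v)
    then obtain b u where w: "w = b # u"
      using base_not_image in_R by (cases w) auto
    with Cons.prems have eq: "f a (foldr f v p) = f b (foldr f u p)"
      by simp
    then have "a = b"
      using disjoint in_R by blast
    with eq have "foldr f v p = foldr f u p"
      using inj_letter in_R by (auto dest: inj_onD)
    with Cons.IH \<open>a = b\<close> w show ?case
      by simp
  qed
  then show ?thesis
    by (auto intro: injI)
qed

definition cone :: "(int \<times> int) set" where
  "cone = {(x, y). 1 \<le> y \<and> y \<le> x}"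

lemma act_in_cone: "p \<in> cone \<Longrightarrow> act a p \<in> cone"
  by (cases p; cases a) (auto simp: cone_def)

lemma inj_act: "inj (act a)"
  by (cases a) (auto intro!: injI)

lemma act_G_above_diagonal: "p \<in> cone \<Longrightarrow> act G p = (x, y) \<Longrightarrow> 2 * y \<le> x"
  by (cases p) (auto simp: cone_def)

lemma act_S_below_diagonal: "p \<in> cone \<Longrightarrow> act S p = (x, y) \<Longrightarrow> x < 2 * y \<and> 2 \<le> y"
  by (cases p) (auto simp: cone_def)

lemma act_G_ne_act_S:
  assumes "p \<in> cone" "q \<in> cone"
  shows "act G p \<noteq> act S q"
proof
  assume eq: "act G p = act S q"
  obtain x y where xy: "act S q = (x, y)"
    by (cases "act S q")
  then have "2 * y \<le> x"
    using act_G_above_diagonal[OF assms(1)] eq by simp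
  moreover have "x < 2 * y"
    using act_S_below_diagonal[OF assms(2) xy] by simp
  ultimately show False
    by simp
qed

lemma act_eq_imp_same_letter:
  assumes "p \<in> cone" "q \<in> cone" "act a p = act b q"
  shows "a = b"
  using act_G_ne_act_S[OF assms(1,2)] act_G_ne_act_S[OF assms(2,1)] assms(3)
  by (cases a; cases b) auto

lemma act_ne_one_one: "p \<in> cone \<Longrightarrow> act a p \<noteq> (1, 1)"
  using act_G_above_diagonal act_S_below_diagonal by (cases a) fastforce+

lemma inj_word_act_one_one: "inj (\<lambda>w. word_act w (1, 1))"
  unfolding word_act_def
proof (rule inj_foldr_ping_pong[where R = cone])
  show "(1, 1) \<in> cone"
    by (simp add: cone_def)
  show "inj_on (act a) cone" for a
    using inj_act by (rule inj_on_subset) simp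
qed (auto simp: act_in_cone act_ne_one_one act_eq_imp_same_letter)

lemma F_eq_1_if_reached:
  assumes "word_act w (1, 1) = (int n, int k)" "(n, k) \<noteq> (0, 0)"
  shows "F n k = 1"
proof -
  have "{v. word_act v (1, 1) = (int n, int k)} = {w}"
    using assms(1) injD[OF inj_word_act_one_one] by auto
  with assms(2) show ?thesis
    by (simp add: F_def)
qed

lemma word_act_replicate_G: "word_act (replicate t G) (1, 1) = (1 + int t, 1)"
  by (induction t) (auto simp: word_act_def)

theorem corollary15:
  fixes t :: nat
  shows "F (3*t + 2) (2*t + 2) = 1 \<and> F (5*t + 4) (2*t + 2) = 1"
proof
  have "word_act (S # replicate t G) (1, 1) = (int (3*t + 2), int (2*t + 2))"
    using word_act_replicate_G[of t] by (simp add: word_act_def)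
  then show "F (3*t + 2) (2*t + 2) = 1"
    by (rule F_eq_1_if_reached) simp
  have "word_act (G # S # replicate t G) (1, 1) = (int (5*t + 4), int (2*t + 2))"
    using word_act_replicate_G[of t] by (simp add: word_act_def)
  then show "F (5*t + 4) (2*t + 2) = 1"
    by (rule F_eq_1_if_reached) simp
qed

end
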